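(* Let $\mathcal{H}$ be a finite-dimensional complex Hilbert space and let $V_1, \dots, V_n$ be linear operators on $\mathcal{H}$ that mutually commute, i.e. $V_\alpha V_\beta = V_\beta V_\alpha$ for all $\alpha, \beta \in \{1,\dots,n\}$. Suppose that $$\sum_{\alpha=1}^n V_\alpha^* V_\alpha = \mathrm{Id}.$$ Then each $V_\alpha$ is normal, i.e. $V_\alpha V_\alpha^* = V_\alpha^* V_\alpha$. In particular, $V_1,\dots,V_n$ are simultaneously diagonalizable: there exists an orthonormal basis of $\mathcal{H}$ consisting of joint eigenvectors of all $V_\alpha$.
   Context: $V^*$ denotes the Hermitian adjoint of $V$. *)

theory Defs
  imports "Jordan_Normal_Form.Schur_Decomposition"
begin

text \<open>Operators on a d-dimensional complex Hilbert space are represented as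
  d x d complex matrices (w.r.t. an orthonormal basis); the Hermitian adjoint
  is the conjugate transpose mat_adjoint.\<close>

definition mat_sum :: "nat \<Rightarrow> (nat \<Rightarrow> complex mat) \<Rightarrow> nat \<Rightarrow> complex mat" where
  "mat_sum d V n = foldr (\<lambda>a B. V a + B) [0..<n] (0\<^sub>m d d)"

text \<open>An orthonormal basis of C^d: d vectors of dimension d, orthonormal
  w.r.t. the standard Hermitian inner product (d orthonormal vectors in a
  d-dimensional space automatically span it).\<close>
definition orthonormal_basis :: "nat \<Rightarrow> complex vec list \<Rightarrow> bool" where
  "orthonormal_basis d us \<longleftrightarrow> length us = d \<and> (\<forall>u\<in>set us. u \<in> carrier_vec d) \<and>
     (\<forall>i<d. \<forall>j<d. (us ! i) \<bullet>c (us ! j) = (if i = j then 1 else 0))"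

definition is_eigenvector :: "complex mat \<Rightarrow> complex vec \<Rightarrow> bool" where
  "is_eigenvector A u \<longleftrightarrow> u \<noteq> 0\<^sub>v (dim_vec u) \<and> (\<exists>c. A *\<^sub>v u = c \<cdot>\<^sub>v u)"

end

theory Submission
  imports Defs "Jordan_Normal_Form.Spectral_Radius" "Jordan_Normal_Form.Matrix_Kernel"
begin

text \<open>
  The hypothesis \<open>\<Sum>\<^sub>\<alpha> V\<^sub>\<alpha>\<^sup>* V\<^sub>\<alpha> = 1\<close> says that
  \<open>x \<mapsto> (V\<^sub>\<alpha> x)\<^sub>\<alpha>\<close> is an isometry. If \<open>e \<noteq> 0\<close> is a joint
  eigenvector, \<open>V\<^sub>\<beta> e = \<lambda>\<^sub>\<beta> e\<close>, then \<open>\<Sum>\<^sub>\<beta> |\<lambda>\<^sub>\<beta>|\<^sup>2 = 1\<close>,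
  and for \<open>y = V\<^sub>\<alpha>\<^sup>* e\<close> commutativity and the isometry give
  \<open>\<Sum>\<^sub>\<beta> \<parallel>V\<^sub>\<beta> y - \<lambda>\<^sub>\<beta> y\<parallel>\<^sup>2 = 0\<close>; so \<open>y\<close> is again a joint eigenvector,
  which forces \<open>y = cnj \<lambda>\<^sub>\<alpha> e\<close>. Consequently the orthogonal complement of any set of
  joint eigenvectors is invariant under every \<open>V\<^sub>\<alpha>\<close>, and since commuting matrices have a
  joint eigenvector in every nonzero common invariant subspace, an orthonormal basis of joint
  eigenvectors can be built one vector at a time. On that basis both \<open>V\<^sub>\<alpha>\<close> and
  \<open>V\<^sub>\<alpha>\<^sup>*\<close> act diagonally, hence they commute.
\<close>

section \<open>Adjoints and the Hermitian inner product\<close>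

lemma mat_adjoint_carrier: "A \<in> carrier_mat n n \<Longrightarrow> mat_adjoint A \<in> carrier_mat n n"
  unfolding mat_adjoint_def by auto

lemma mat_adjoint_index:
  "A \<in> carrier_mat n n \<Longrightarrow> i < n \<Longrightarrow> j < n \<Longrightarrow> mat_adjoint A $$ (i, j) = cnj (A $$ (j, i))"
  unfolding mat_adjoint_def by (auto simp: mat_of_rows_def)

lemma mat_adjoint_adjoint:
  fixes A :: "complex mat"
  assumes A: "A \<in> carrier_mat n n"
  shows "mat_adjoint (mat_adjoint A) = A"
  using A mat_adjoint_carrier[OF A] mat_adjoint_carrier[OF mat_adjoint_carrier[OF A]]
  by (intro eq_matI) (auto simp: mat_adjoint_index)

lemma cscalar_prod_mult_mat_vec_left:
  fixes A :: "complex mat"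
  assumes A: "A \<in> carrier_mat n n" and x: "x \<in> carrier_vec n" and y: "y \<in> carrier_vec n"
  shows "(A *\<^sub>v x) \<bullet>c y = x \<bullet>c (mat_adjoint A *\<^sub>v y)"
proof -
  have "(A *\<^sub>v x) \<bullet>c y = (\<Sum>i<n. \<Sum>j<n. A $$ (i, j) * x $ j * cnj (y $ i))"
    using A x y by (auto simp: scalar_prod_def row_def atLeast0LessThan sum_distrib_right)
  also have "\<dots> = (\<Sum>j<n. \<Sum>i<n. A $$ (i, j) * x $ j * cnj (y $ i))"
    by (rule sum.swap)
  also have "\<dots> = x \<bullet>c (mat_adjoint A *\<^sub>v y)"
    using A x y mat_adjoint_carrier[OF A]
    by (auto simp: scalar_prod_def row_def atLeast0LessThan mat_adjoint_index
        sum_distrib_left mult_ac intro!: sum.cong)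
  finally show ?thesis .
qed

lemma cnj_cscalar_prod:
  fixes x y :: "complex vec"
  assumes "x \<in> carrier_vec n" "y \<in> carrier_vec n"
  shows "cnj (x \<bullet>c y) = y \<bullet>c x"
  using assms conjugate_sprod_vec[of x n "conjugate y"] by (simp add: comm_scalar_prod[of _ n])

lemma cscalar_prod_diff_diff:
  fixes x y :: "complex vec"
  assumes "x \<in> carrier_vec n" "y \<in> carrier_vec n"
  shows "(x - y) \<bullet>c (x - y) = x \<bullet>c x - x \<bullet>c y - y \<bullet>c x + y \<bullet>c y"
  using assms by (simp add: scalar_prod_def sum_subtractf sum.distrib algebra_simps)

lemma eq_of_cscalar_prod_diff_eq_0:
  fixes x y :: "complex vec"
  assumes x: "x \<in> carrier_vec n" and y: "y \<in> carrier_vec n" and "(x - y) \<bullet>c (x - y) = 0"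
  shows "x = y"
proof -
  have "x - y = 0\<^sub>v n" using assms conjugate_square_eq_0_vec[of "x - y" n] by simp
  moreover have "x = (x - y) + y" using x y by auto
  ultimately show ?thesis using y by simp
qed

section \<open>Common eigenvectors of commuting matrices\<close>

definition commuting_family :: "nat \<Rightarrow> nat \<Rightarrow> (nat \<Rightarrow> 'a :: semiring_0 mat) \<Rightarrow> bool" where
  "commuting_family d k A \<longleftrightarrow>
     (\<forall>i<k. A i \<in> carrier_mat d d) \<and> (\<forall>i<k. \<forall>j<k. A i * A j = A j * A i)"

definition common_eigenvector :: "nat \<Rightarrow> (nat \<Rightarrow> 'a :: comm_ring_1 mat) \<Rightarrow> 'a vec \<Rightarrow> bool" where
  "common_eigenvector k A v \<longleftrightarrow> v \<noteq> 0\<^sub>v (dim_vec v) \<and> (\<forall>i<k. \<exists>c. A i *\<^sub>v v = c \<cdot>\<^sub>v v)"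

lemma commuting_familyD:
  assumes "commuting_family d k A" "i < k"
  shows "A i \<in> carrier_mat d d" "j < k \<Longrightarrow> A i * A j = A j * A i"
  using assms unfolding commuting_family_def by auto

lemma commuting_family_mult_vec_commute:
  assumes "commuting_family d k A" "i < k" "j < k" "v \<in> carrier_vec d"
  shows "A i *\<^sub>v (A j *\<^sub>v v) = A j *\<^sub>v (A i *\<^sub>v v)"
  using assms commuting_familyD[OF assms(1)] by (metis assoc_mult_mat_vec)

lemma char_matrix_mult_vec_eq_0_iff:
  fixes A :: "'a :: field mat"
  assumes A: "A \<in> carrier_mat n n" and v: "v \<in> carrier_vec n"
  shows "char_matrix A e *\<^sub>v v = 0\<^sub>v n \<longleftrightarrow> A *\<^sub>v v = e \<cdot>\<^sub>v v"
proof (cases "v = 0\<^sub>v n")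
  case True
  have "B *\<^sub>v 0\<^sub>v n = 0\<^sub>v n" if "B \<in> carrier_mat n n" for B :: "'a mat"
    using that by (intro eq_vecI) (auto simp: scalar_prod_def)
  then show ?thesis using True A by (auto intro!: eq_vecI)
next
  case False
  then show ?thesis
    using eigenvector_char_matrix[OF A, of v e] A v unfolding eigenvector_def by auto
qed

lemma mat_kernel_coordinates:
  fixes M :: "complex mat"
  assumes M: "M \<in> carrier_mat r m"
  shows "\<exists>s P L. P \<in> carrier_mat m s \<and> L \<in> carrier_mat s m \<and> L * P = 1\<^sub>m s
     \<and> (\<forall>c\<in>carrier_vec s. M *\<^sub>v (P *\<^sub>v c) = 0\<^sub>v r)
     \<and> (\<forall>v\<in>carrier_vec m. M *\<^sub>v v = 0\<^sub>v r \<longrightarrow> P *\<^sub>v (L *\<^sub>v v) = v)"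
proof -
  interpret K: kernel r m M by (unfold_locales, rule M)
  obtain B where fin: "finite B" and bas: "K.basis B"
    using kernel_basis_exists[OF M] by blast
  interpret cof_vec_space m "TYPE(complex)" .
  from bas have Bk: "B \<subseteq> mat_kernel M" and indep: "\<not> K.Ker.lin_dep B"
    and span: "K.Ker.span B = mat_kernel M"
    unfolding K.Ker.basis_def by auto
  have Bc: "B \<subseteq> carrier_vec m" using Bk mat_kernel_carrier[OF M] by auto
  obtain ws where ws: "set ws = B" "distinct ws" using finite_distinct_list[OF fin] by blast
  define us where "us = gram_schmidt m ws"
  from gram_schmidt_result[of ws, OF _ ws(2) _ us_def] ws Bc indep K.lindep_same[OF Bk]
  have span_us: "K.NC.span (set us) = mat_kernel M" and orth: "corthogonal us"
    and us: "set us \<subseteq> carrier_vec m"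
    using span K.span_same[OF Bk] by auto
  define s where "s = length us"
  define P where "P = mat_of_cols m us"
  define L where "L = mat_of_rows m (map vec_inv us)"
  have P: "P \<in> carrier_mat m s" unfolding P_def s_def by simp
  have L: "L \<in> carrier_mat s m"
    unfolding L_def s_def using mat_of_rows_carrier(1)[of m "map vec_inv us"] by simp
  have LP: "L * P = 1\<^sub>m s"
    using corthogonal_inv[OF orth us] unfolding inverts_mat_def L_def P_def s_def by simp
  have dim_us: "\<forall>w\<in>set us. dim_vec w = m" using us by auto
  have span_P: "P *\<^sub>v c = K.NC.lincomb_list (\<lambda>i. c $ i) us" if "c \<in> carrier_vec s" for c
  proof -
    have "c = vec (length us) (\<lambda>i. c $ i)" using that s_def by auto
    then show ?thesis using K.NC.lincomb_list_as_mat_mult[OF dim_us] P_def by simp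
  qed
  show ?thesis
  proof (intro exI conjI ballI impI)
    show "P \<in> carrier_mat m s" "L \<in> carrier_mat s m" "L * P = 1\<^sub>m s" by fact+
  next
    fix c :: "complex vec" assume "c \<in> carrier_vec s"
    then have "P *\<^sub>v c \<in> K.NC.span (set us)"
      using span_P K.NC.span_list_as_span[OF us] unfolding K.NC.span_list_def by auto
    then show "M *\<^sub>v (P *\<^sub>v c) = 0\<^sub>v r" using span_us mat_kernelD[OF M] by auto
  next
    fix v :: "complex vec" assume v: "v \<in> carrier_vec m" and Mv: "M *\<^sub>v v = 0\<^sub>v r"
    then have "v \<in> K.NC.span_list us"
      using mat_kernelI[OF M v Mv] span_us K.NC.span_list_as_span[OF us] by simp
    then obtain lc where "v = K.NC.lincomb_list lc us" by (metis K.NC.in_span_listE)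
    then have v_eq: "v = P *\<^sub>v vec s lc"
      using K.NC.lincomb_list_as_mat_mult[OF dim_us] by (simp add: P_def s_def)
    have "P *\<^sub>v (L *\<^sub>v (P *\<^sub>v vec s lc)) = P *\<^sub>v ((L * P) *\<^sub>v vec s lc)"
      using assoc_mult_mat_vec[OF L P] by simp
    then show "P *\<^sub>v (L *\<^sub>v v) = v" using v_eq LP by simp
  qed
qed

lemma mat_eq_if_mult_vec_eq:
  fixes X Y :: "'a :: comm_ring_1 mat"
  assumes X: "X \<in> carrier_mat m n" and Y: "Y \<in> carrier_mat m n"
    and eq: "\<And>v. v \<in> carrier_vec n \<Longrightarrow> X *\<^sub>v v = Y *\<^sub>v v"
  shows "X = Y"
proof (rule eq_matI)
  fix i j assume i: "i < dim_row Y" and j: "j < dim_col Y"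
  have "X $$ (i, j) = (X *\<^sub>v unit_vec n j) $ i" using X Y i j by simp
  also have "\<dots> = (Y *\<^sub>v unit_vec n j) $ i" using eq[of "unit_vec n j"] by simp
  also have "\<dots> = Y $$ (i, j)" using Y i j by simp
  finally show "X $$ (i, j) = Y $$ (i, j)" .
qed (use X Y in auto)

lemma compression_mult_vec:
  fixes A :: "'a :: comm_ring_1 mat"
  assumes P: "P \<in> carrier_mat m s" and L: "L \<in> carrier_mat s m" and A: "A \<in> carrier_mat m m"
    and c: "c \<in> carrier_vec s" and fixed: "P *\<^sub>v (L *\<^sub>v (A *\<^sub>v (P *\<^sub>v c))) = A *\<^sub>v (P *\<^sub>v c)"
  shows "P *\<^sub>v ((L * A * P) *\<^sub>v c) = A *\<^sub>v (P *\<^sub>v c)"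
proof -
  have "(L * A * P) *\<^sub>v c = (L * A) *\<^sub>v (P *\<^sub>v c)"
    by (rule assoc_mult_mat_vec[OF mult_carrier_mat[OF L A] P c])
  also have "\<dots> = L *\<^sub>v (A *\<^sub>v (P *\<^sub>v c))" using assoc_mult_mat_vec[OF L A] P c by simp
  finally show ?thesis using fixed by simp
qed

lemma commuting_family_compression:
  fixes A :: "nat \<Rightarrow> 'a :: comm_ring_1 mat"
  assumes P: "P \<in> carrier_mat m s" and L: "L \<in> carrier_mat s m" and LP: "L * P = 1\<^sub>m s"
    and fam: "commuting_family m k A"
    and fixed: "\<And>i c. i < k \<Longrightarrow> c \<in> carrier_vec s \<Longrightarrow>
      P *\<^sub>v (L *\<^sub>v (A i *\<^sub>v (P *\<^sub>v c))) = A i *\<^sub>v (P *\<^sub>v c)"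
  shows "commuting_family s k (\<lambda>i. L * A i * P)"
proof -
  define C where "C i = L * A i * P" for i
  have A: "A i \<in> carrier_mat m m" if "i < k" for i using commuting_familyD(1)[OF fam that] .
  have C: "C i \<in> carrier_mat s s" if "i < k" for i unfolding C_def using L A[OF that] P by simp
  have PC: "P *\<^sub>v (C i *\<^sub>v c) = A i *\<^sub>v (P *\<^sub>v c)" if i: "i < k" and c: "c \<in> carrier_vec s" for i c
    unfolding C_def by (rule compression_mult_vec[OF P L A[OF i] c fixed[OF i c]])
  have CC: "C i *\<^sub>v (C j *\<^sub>v c) = L *\<^sub>v (A i *\<^sub>v (A j *\<^sub>v (P *\<^sub>v c)))"
    if i: "i < k" and j: "j < k" and c: "c \<in> carrier_vec s" for i j c
  proof -
    have Cjc: "C j *\<^sub>v c \<in> carrier_vec s" using C[OF j] c by simp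
    have "C i *\<^sub>v (C j *\<^sub>v c) = L *\<^sub>v (P *\<^sub>v (C i *\<^sub>v (C j *\<^sub>v c)))"
      using mult_mat_vec_carrier[OF C[OF i] Cjc]
        assoc_mult_mat_vec[OF L P mult_mat_vec_carrier[OF C[OF i] Cjc]] LP by simp
    then show ?thesis using PC[OF i Cjc] PC[OF j c] by simp
  qed
  have "C i * C j = C j * C i" if i: "i < k" and j: "j < k" for i j
    using C[OF i] C[OF j] P
    by (intro mat_eq_if_mult_vec_eq[of _ s s])
      (auto simp: CC[OF i j] CC[OF j i] commuting_family_mult_vec_commute[OF fam i j])
  then show ?thesis using C unfolding commuting_family_def C_def by blast
qed

text \<open>The full-space case is a hypothesis so that this lemma can serve as the induction step
  of the next one.\<close>

lemma common_eigenvector_in_invariant_kernel: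
  fixes A :: "nat \<Rightarrow> complex mat" and M :: "complex mat"
  assumes whole_space: "\<And>s (C :: nat \<Rightarrow> complex mat). 0 < s \<Longrightarrow> commuting_family s k C \<Longrightarrow>
      \<exists>x\<in>carrier_vec s. common_eigenvector k C x"
    and M: "M \<in> carrier_mat r m" and fam: "commuting_family m k A"
    and inv: "\<And>i v. i < k \<Longrightarrow> v \<in> carrier_vec m \<Longrightarrow> M *\<^sub>v v = 0\<^sub>v r \<Longrightarrow> M *\<^sub>v (A i *\<^sub>v v) = 0\<^sub>v r"
    and w: "w \<in> carrier_vec m" and w0: "w \<noteq> 0\<^sub>v m" and Mw: "M *\<^sub>v w = 0\<^sub>v r"
  shows "\<exists>v\<in>carrier_vec m. M *\<^sub>v v = 0\<^sub>v r \<and> common_eigenvector k A v"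
proof -
  obtain s P L where P: "P \<in> carrier_mat m s" and L: "L \<in> carrier_mat s m" and LP: "L * P = 1\<^sub>m s"
    and MP: "\<forall>c\<in>carrier_vec s. M *\<^sub>v (P *\<^sub>v c) = 0\<^sub>v r"
    and PL: "\<forall>v\<in>carrier_vec m. M *\<^sub>v v = 0\<^sub>v r \<longrightarrow> P *\<^sub>v (L *\<^sub>v v) = v"
    using mat_kernel_coordinates[OF M] by blast
  have A: "A i \<in> carrier_mat m m" if "i < k" for i using commuting_familyD(1)[OF fam that] .
  have fixed: "P *\<^sub>v (L *\<^sub>v (A i *\<^sub>v (P *\<^sub>v c))) = A i *\<^sub>v (P *\<^sub>v c)"
    if "i < k" "c \<in> carrier_vec s" for i c
    using PL inv[OF that(1)] MP A[OF that(1)] P that(2) by simp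
  have "s \<noteq> 0"
  proof
    assume "s = 0"
    then have "P *\<^sub>v (L *\<^sub>v w) = 0\<^sub>v m" using P L by (intro eq_vecI) (auto simp: scalar_prod_def)
    then show False using PL w w0 Mw by simp
  qed
  then obtain x where x: "x \<in> carrier_vec s" and ev: "common_eigenvector k (\<lambda>i. L * A i * P) x"
    using whole_space commuting_family_compression[OF P L LP fam fixed] by blast
  show ?thesis
  proof (intro bexI conjI)
    show "P *\<^sub>v x \<in> carrier_vec m" "M *\<^sub>v (P *\<^sub>v x) = 0\<^sub>v r" using P x MP by simp_all
    have "P *\<^sub>v x \<noteq> 0\<^sub>v m"
    proof
      assume "P *\<^sub>v x = 0\<^sub>v m"
      then have "x = L *\<^sub>v 0\<^sub>v m" using assoc_mult_mat_vec[OF L P x] LP x by simp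
      also have "\<dots> = 0\<^sub>v s" using L by (intro eq_vecI) (auto simp: scalar_prod_def)
      finally show False using ev x unfolding common_eigenvector_def by simp
    qed
    moreover have "\<exists>c. A i *\<^sub>v (P *\<^sub>v x) = c \<cdot>\<^sub>v (P *\<^sub>v x)" if i: "i < k" for i
    proof -
      obtain c where "(L * A i * P) *\<^sub>v x = c \<cdot>\<^sub>v x"
        using ev i unfolding common_eigenvector_def by blast
      then have "A i *\<^sub>v (P *\<^sub>v x) = c \<cdot>\<^sub>v (P *\<^sub>v x)"
        using compression_mult_vec[OF P L A[OF i] x fixed[OF i x]] mult_mat_vec[OF P x] by simp
      then show ?thesis by blast
    qed
    ultimately show "common_eigenvector k A (P *\<^sub>v x)"
      unfolding common_eigenvector_def using P by simp
  qed
qed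

lemma commuting_family_common_eigenvector:
  fixes C :: "nat \<Rightarrow> complex mat"
  assumes "0 < s" "commuting_family s k C"
  shows "\<exists>x\<in>carrier_vec s. common_eigenvector k C x"
  using assms
proof (induction k arbitrary: s C)
  case 0
  have "(unit_vec s 0 :: complex vec) \<noteq> 0\<^sub>v s"
    using \<open>0 < s\<close> by (metis index_unit_vec(1) index_zero_vec(1) zero_neq_one)
  then show ?case unfolding common_eigenvector_def by (intro bexI[of _ "unit_vec s 0"]) auto
next
  case (Suc k)
  have fam: "commuting_family s k C" and B: "C k \<in> carrier_mat s s"
    using Suc.prems(2) unfolding commuting_family_def by auto
  obtain mu where "eigenvalue (C k) mu"
    using spectrum_non_empty[OF B Suc.prems(1)] unfolding spectrum_def by auto
  then obtain w where w: "w \<in> carrier_vec s" "w \<noteq> 0\<^sub>v s" "char_matrix (C k) mu *\<^sub>v w = 0\<^sub>v s"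
    unfolding eigenvalue_def eigenvector_char_matrix[OF B] by blast
  have eigenspace_iff: "char_matrix (C k) mu *\<^sub>v v = 0\<^sub>v s \<longleftrightarrow> C k *\<^sub>v v = mu \<cdot>\<^sub>v v"
    if "v \<in> carrier_vec s" for v
    by (rule char_matrix_mult_vec_eq_0_iff[OF B that])
  have "\<exists>v\<in>carrier_vec s. char_matrix (C k) mu *\<^sub>v v = 0\<^sub>v s \<and> common_eigenvector k C v"
  proof (rule common_eigenvector_in_invariant_kernel[OF Suc.IH _ fam _ w])
    fix i v assume i: "i < k" and v: "v \<in> carrier_vec s" and "char_matrix (C k) mu *\<^sub>v v = 0\<^sub>v s"
    then have "C k *\<^sub>v v = mu \<cdot>\<^sub>v v" using eigenspace_iff by blast
    moreover have "C k *\<^sub>v (C i *\<^sub>v v) = C i *\<^sub>v (C k *\<^sub>v v)"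
      using commuting_family_mult_vec_commute[OF Suc.prems(2) _ _ v] i by simp
    ultimately show "char_matrix (C k) mu *\<^sub>v (C i *\<^sub>v v) = 0\<^sub>v s"
      using eigenspace_iff commuting_familyD(1)[OF fam i] v by (simp add: mult_mat_vec)
  qed (use B in auto)
  then obtain v where v: "v \<in> carrier_vec s" "C k *\<^sub>v v = mu \<cdot>\<^sub>v v" "common_eigenvector k C v"
    using eigenspace_iff by blast
  then have "common_eigenvector (Suc k) C v"
    unfolding common_eigenvector_def using less_Suc_eq by auto
  then show ?case using v by blast
qed

section \<open>Orthonormal bases of common eigenvectors\<close>

lemma exists_nonzero_orthogonal_vec:
  fixes us :: "complex vec list"
  assumes us: "set us \<subseteq> carrier_vec d" and len: "length us < d"
  shows "\<exists>w\<in>carrier_vec d. w \<noteq> 0\<^sub>v d \<and> (\<forall>u\<in>set us. w \<bullet>c u = 0)"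
proof -
  \<comment> \<open>Padding the rows \<open>conjugate u\<^sub>i\<close> with zero rows gives a singular square
    matrix, and its kernel is orthogonal to every \<open>u\<^sub>i\<close>.\<close>
  define k where "k = length us"
  define c where "c i = (if i < k then conjugate (us ! i) else 0\<^sub>v d)" for i
  have c: "c i \<in> carrier_vec d" for i
    using us by (auto simp: c_def k_def intro!: carrier_vec_conjugate)
  define f where "f i = (if i = k then 0\<^sub>v d else c i)" for i
  have f: "dim_vec (f i) = d" for i using c[of i] by (simp add: f_def)
  define N where "N = mat\<^sub>r d d f"
  have "det N = 0" unfolding N_def f_def using len c by (intro det_row_0) (auto simp: k_def)
  then obtain w where w: "w \<in> carrier_vec d" "w \<noteq> 0\<^sub>v d" and Nw: "N *\<^sub>v w = 0\<^sub>v d"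
    using det_0_iff_vec_prod_zero_field[of N d] by (auto simp: N_def)
  have orth: "w \<bullet>c us ! i = 0" if i: "i < k" for i
  proof -
    have ui: "us ! i \<in> carrier_vec d" using us i by (auto simp: k_def)
    have "i < d" using i len by (simp add: k_def)
    then have "row N i = f i" unfolding N_def using f by simp
    also have "\<dots> = conjugate (us ! i)" using i by (simp add: f_def c_def)
    finally have "row N i = conjugate (us ! i)" .
    then have "(N *\<^sub>v w) $ i = conjugate (us ! i) \<bullet> w" using i len by (simp add: N_def k_def)
    also have "\<dots> = w \<bullet>c us ! i" using comm_scalar_prod[of w d "conjugate (us ! i)"] ui w by simp
    finally show ?thesis using Nw i len by (simp add: k_def)
  qed
  have "\<forall>u\<in>set us. w \<bullet>c u = 0"
  proof
    fix u assume "u \<in> set us"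
    then obtain i where "i < k" "u = us ! i" by (auto simp: in_set_conv_nth k_def)
    then show "w \<bullet>c u = 0" using orth by simp
  qed
  then show ?thesis using w by blast
qed

lemma exists_normalizing_scalar:
  fixes v :: "complex vec"
  assumes v: "v \<in> carrier_vec n" and v0: "v \<noteq> 0\<^sub>v n"
  shows "\<exists>c. c \<noteq> 0 \<and> (c \<cdot>\<^sub>v v) \<bullet>c (c \<cdot>\<^sub>v v) = 1"
proof -
  define N where "N = Re (v \<bullet>c v)"
  have "v \<bullet>c v > 0" using v v0 by simp
  then have vv: "v \<bullet>c v = of_real N" and N: "N > 0"
    unfolding N_def by (auto simp: less_complex_def complex_eq_iff)
  define r where "r = sqrt (1 / N)"
  have r1: "r * r * N = 1" using N by (simp add: r_def)
  define c where "c = complex_of_real r"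
  have "(c \<cdot>\<^sub>v v) \<bullet>c (c \<cdot>\<^sub>v v) = of_real (r * r * N)"
    using v by (simp add: conjugate_smult_vec c_def vv)
  also have "\<dots> = 1" by (simp only: r1 of_real_1)
  finally show ?thesis using r1 by (intro exI[of _ c]) (auto simp: c_def)
qed

definition orthonormal_list :: "complex vec list \<Rightarrow> bool" where
  "orthonormal_list us \<longleftrightarrow>
     distinct us \<and> (\<forall>u\<in>set us. \<forall>v\<in>set us. u \<bullet>c v = (if u = v then 1 else 0))"

lemma orthonormal_basisI:
  assumes "length us = d" "set us \<subseteq> carrier_vec d" "orthonormal_list us"
  shows "orthonormal_basis d us"
  unfolding orthonormal_basis_def
proof (intro conjI allI impI)
  fix i j assume i: "i < d" and j: "j < d"
  have "us ! i \<in> set us" "us ! j \<in> set us" using i j assms(1) by auto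
  moreover have "us ! i = us ! j \<longleftrightarrow> i = j"
    using assms i j nth_eq_iff_index_eq[of us i j] unfolding orthonormal_list_def by simp
  ultimately show "us ! i \<bullet>c us ! j = (if i = j then 1 else 0)"
    using assms(3) unfolding orthonormal_list_def by simp
qed (use assms in auto)

lemma mat_eq_if_eq_on_orthonormal_basis:
  fixes X Y :: "complex mat"
  assumes X: "X \<in> carrier_mat d d" and Y: "Y \<in> carrier_mat d d"
    and basis: "orthonormal_basis d us" and eq: "\<And>u. u \<in> set us \<Longrightarrow> X *\<^sub>v u = Y *\<^sub>v u"
  shows "X = Y"
proof -
  have len: "length us = d" and us: "set us \<subseteq> carrier_vec d"
    and on: "\<forall>i<d. \<forall>j<d. us ! i \<bullet>c us ! j = (if i = j then 1 else 0)"
    using basis unfolding orthonormal_basis_def by auto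
  have ui: "us ! i \<in> carrier_vec d" if "i < d" for i using that us len by auto
  define U where "U = mat_of_cols d us"
  define U' where "U' = mat_of_rows d (map conjugate us)"
  have U: "U \<in> carrier_mat d d" and U': "U' \<in> carrier_mat d d"
    unfolding U_def U'_def using len mat_of_rows_carrier(1)[of d "map conjugate us"] by auto
  have "U' * U = 1\<^sub>m d"
  proof (rule eq_matI)
    fix i j assume "i < dim_row (1\<^sub>m d :: complex mat)" "j < dim_col (1\<^sub>m d :: complex mat)"
    then have i: "i < d" and j: "j < d" by auto
    have "(U' * U) $$ (i, j) = conjugate (us ! i) \<bullet> us ! j"
      using i j len ui[OF i] ui[OF j] by (simp add: U_def U'_def mat_of_rows_row)
    also have "\<dots> = us ! j \<bullet>c us ! i"
      using comm_scalar_prod[of "conjugate (us ! i)" d "us ! j"] ui[OF i] ui[OF j] by simp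
    finally show "(U' * U) $$ (i, j) = 1\<^sub>m d $$ (i, j)" using on i j by auto
  qed (use U U' in auto)
  then have UU': "U * U' = 1\<^sub>m d" by (rule mat_mult_left_right_inverse[OF U' U])
  have "X * U = Y * U"
  proof (rule mat_col_eqI)
    fix j assume "j < dim_col (Y * U)"
    then have j: "j < d" using Y U by simp
    have "col U j = us ! j" using j len ui[OF j] by (simp add: U_def)
    then have "col (X * U) j = X *\<^sub>v us ! j" "col (Y * U) j = Y *\<^sub>v us ! j"
      using col_mult2[OF X U j] col_mult2[OF Y U j] by simp_all
    then show "col (X * U) j = col (Y * U) j" using eq[of "us ! j"] j len by simp
  qed (use X Y U in auto)
  have "X = X * (U * U')" using X UU' by simp
  also have "\<dots> = (X * U) * U'" using assoc_mult_mat[OF X U U'] by simp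
  also have "\<dots> = (Y * U) * U'" using \<open>X * U = Y * U\<close> by simp
  also have "\<dots> = Y * (U * U')" using assoc_mult_mat[OF Y U U'] by simp
  also have "\<dots> = Y" using Y UU' by simp
  finally show ?thesis .
qed

lemma normal_if_orthonormal_basis_of_eigenvectors_of_adjoint:
  fixes A :: "complex mat"
  assumes A: "A \<in> carrier_mat d d" and basis: "orthonormal_basis d us"
    and ev: "\<And>u. u \<in> set us \<Longrightarrow> \<exists>a. A *\<^sub>v u = a \<cdot>\<^sub>v u"
    and ev_adj: "\<And>u. u \<in> set us \<Longrightarrow> \<exists>b. mat_adjoint A *\<^sub>v u = b \<cdot>\<^sub>v u"
  shows "A * mat_adjoint A = mat_adjoint A * A"
proof (rule mat_eq_if_eq_on_orthonormal_basis[OF _ _ basis])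
  have A': "mat_adjoint A \<in> carrier_mat d d" using mat_adjoint_carrier[OF A] .
  show "A * mat_adjoint A \<in> carrier_mat d d" "mat_adjoint A * A \<in> carrier_mat d d"
    using A A' by auto
  fix u assume u: "u \<in> set us"
  then have uc: "u \<in> carrier_vec d" using basis unfolding orthonormal_basis_def by auto
  obtain a b where a: "A *\<^sub>v u = a \<cdot>\<^sub>v u" and b: "mat_adjoint A *\<^sub>v u = b \<cdot>\<^sub>v u"
    using ev[OF u] ev_adj[OF u] by blast
  have "(A * mat_adjoint A) *\<^sub>v u = (b * a) \<cdot>\<^sub>v u"
    using A A' uc by (simp add: assoc_mult_mat_vec[of _ d d _ d] a b mult_mat_vec smult_smult_assoc)
  also have "\<dots> = (mat_adjoint A * A) *\<^sub>v u"
    using A A' uc by (simp add: assoc_mult_mat_vec[of _ d d _ d] a b mult_mat_vec smult_smult_assoc mult.commute)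
  finally show "(A * mat_adjoint A) *\<^sub>v u = (mat_adjoint A * A) *\<^sub>v u" .
qed

lemma mat_of_rows_conjugate_mult_vec_eq_0_iff:
  fixes us :: "complex vec list"
  assumes us: "set us \<subseteq> carrier_vec d" and v: "v \<in> carrier_vec d"
  shows "mat_of_rows d (map conjugate us) *\<^sub>v v = 0\<^sub>v (length us) \<longleftrightarrow> (\<forall>u\<in>set us. v \<bullet>c u = 0)"
proof -
  let ?M = "mat_of_rows d (map conjugate us)"
  have M: "?M \<in> carrier_mat (length us) d"
    using mat_of_rows_carrier(1)[of d "map conjugate us"] by simp
  have Mi: "(?M *\<^sub>v v) $ i = v \<bullet>c us ! i" if i: "i < length us" for i
  proof -
    have ui: "us ! i \<in> carrier_vec d" using us i by auto
    then have "(?M *\<^sub>v v) $ i = conjugate (us ! i) \<bullet> v" using M i by (simp add: mat_of_rows_row)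
    also have "\<dots> = v \<bullet>c us ! i" using comm_scalar_prod[of "conjugate (us ! i)" d v] ui v by simp
    finally show ?thesis .
  qed
  show ?thesis
  proof
    assume "?M *\<^sub>v v = 0\<^sub>v (length us)"
    then show "\<forall>u\<in>set us. v \<bullet>c u = 0" using Mi by (auto simp: in_set_conv_nth)
  next
    assume "\<forall>u\<in>set us. v \<bullet>c u = 0"
    then show "?M *\<^sub>v v = 0\<^sub>v (length us)" using Mi M by (intro eq_vecI) auto
  qed
qed

lemma common_eigenvector_orthogonal_to_common_eigenvectors:
  fixes V :: "nat \<Rightarrow> complex mat"
  assumes fam: "commuting_family d n V"
    and adj: "\<And>u \<alpha>. u \<in> carrier_vec d \<Longrightarrow> common_eigenvector n V u \<Longrightarrow> \<alpha> < n \<Longrightarrow>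
      \<exists>c. mat_adjoint (V \<alpha>) *\<^sub>v u = c \<cdot>\<^sub>v u"
    and us: "set us \<subseteq> carrier_vec d" and ev: "\<forall>u\<in>set us. common_eigenvector n V u"
    and len: "length us < d"
  shows "\<exists>v\<in>carrier_vec d. common_eigenvector n V v \<and> (\<forall>u\<in>set us. v \<bullet>c u = 0)"
proof -
  define M where "M = mat_of_rows d (map conjugate us)"
  have M: "M \<in> carrier_mat (length us) d"
    unfolding M_def using mat_of_rows_carrier(1)[of d "map conjugate us"] by simp
  note M0_iff = mat_of_rows_conjugate_mult_vec_eq_0_iff[OF us, folded M_def]
  obtain w where w: "w \<in> carrier_vec d" "w \<noteq> 0\<^sub>v d" "\<forall>u\<in>set us. w \<bullet>c u = 0"
    using exists_nonzero_orthogonal_vec[OF us len] by blast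
  have "M *\<^sub>v (V \<alpha> *\<^sub>v v) = 0\<^sub>v (length us)"
    if \<alpha>: "\<alpha> < n" and v: "v \<in> carrier_vec d" and Mv: "M *\<^sub>v v = 0\<^sub>v (length us)" for \<alpha> v
  proof -
    have V: "V \<alpha> \<in> carrier_mat d d" using commuting_familyD(1)[OF fam \<alpha>] .
    have "(V \<alpha> *\<^sub>v v) \<bullet>c u = 0" if u: "u \<in> set us" for u
    proof -
      have uc: "u \<in> carrier_vec d" using u us by auto
      obtain c where c: "mat_adjoint (V \<alpha>) *\<^sub>v u = c \<cdot>\<^sub>v u" using adj[OF uc _ \<alpha>] ev u by blast
      have "(V \<alpha> *\<^sub>v v) \<bullet>c u = cnj c * (v \<bullet>c u)"
        using cscalar_prod_mult_mat_vec_left[OF V v uc] c v uc by (simp add: conjugate_smult_vec)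
      then show ?thesis using M0_iff[OF v] Mv u by simp
    qed
    then show ?thesis using M0_iff[of "V \<alpha> *\<^sub>v v"] V v by simp
  qed
  then show ?thesis
    using common_eigenvector_in_invariant_kernel[OF commuting_family_common_eigenvector M fam _ w(1,2)]
      M0_iff w by blast
qed

lemma common_eigenvector_smult:
  fixes A :: "nat \<Rightarrow> 'a :: field mat"
  assumes "common_eigenvector k A v" "c \<noteq> 0" "\<forall>i<k. A i \<in> carrier_mat (dim_vec v) (dim_vec v)"
  shows "common_eigenvector k A (c \<cdot>\<^sub>v v)"
  unfolding common_eigenvector_def
proof (intro conjI allI impI)
  show "c \<cdot>\<^sub>v v \<noteq> 0\<^sub>v (dim_vec (c \<cdot>\<^sub>v v))"
    using assms(1,2) unfolding common_eigenvector_def by (auto simp: vec_eq_iff)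
  fix i assume i: "i < k"
  then obtain l where "A i *\<^sub>v v = l \<cdot>\<^sub>v v" using assms(1) unfolding common_eigenvector_def by blast
  then have "A i *\<^sub>v (c \<cdot>\<^sub>v v) = l \<cdot>\<^sub>v (c \<cdot>\<^sub>v v)"
    using mult_mat_vec[OF assms(3)[rule_format, OF i]] by (simp add: smult_smult_assoc mult.commute)
  then show "\<exists>l. A i *\<^sub>v (c \<cdot>\<^sub>v v) = l \<cdot>\<^sub>v (c \<cdot>\<^sub>v v)" by blast
qed

lemma orthonormal_list_snoc:
  assumes on: "orthonormal_list us" and us: "set us \<subseteq> carrier_vec d" and u: "u \<in> carrier_vec d"
    and uu: "u \<bullet>c u = 1" and orth: "\<forall>u'\<in>set us. u \<bullet>c u' = 0"
  shows "orthonormal_list (us @ [u])"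
proof -
  have orth': "u' \<bullet>c u = 0" if "u' \<in> set us" for u'
    using cnj_cscalar_prod[of u d u'] u us orth that by auto
  have "u \<notin> set us" using orth uu by fastforce
  then show ?thesis using on orth orth' uu unfolding orthonormal_list_def by auto
qed

lemma orthonormal_list_of_common_eigenvectors:
  fixes V :: "nat \<Rightarrow> complex mat"
  assumes fam: "commuting_family d n V"
    and adj: "\<And>u \<alpha>. u \<in> carrier_vec d \<Longrightarrow> common_eigenvector n V u \<Longrightarrow> \<alpha> < n \<Longrightarrow>
      \<exists>c. mat_adjoint (V \<alpha>) *\<^sub>v u = c \<cdot>\<^sub>v u"
  shows "k \<le> d \<Longrightarrow> \<exists>us. length us = k \<and> set us \<subseteq> carrier_vec d \<and> orthonormal_list us
    \<and> (\<forall>u\<in>set us. common_eigenvector n V u)"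
proof (induction k)
  case 0
  show ?case by (intro exI[of _ "[]"]) (simp add: orthonormal_list_def)
next
  case (Suc k)
  then obtain us where len: "length us = k" and us: "set us \<subseteq> carrier_vec d"
    and on: "orthonormal_list us" and ev: "\<forall>u\<in>set us. common_eigenvector n V u" by auto
  obtain v where v: "v \<in> carrier_vec d" and ev_v: "common_eigenvector n V v"
    and orth: "\<forall>u\<in>set us. v \<bullet>c u = 0"
    using common_eigenvector_orthogonal_to_common_eigenvectors[OF fam adj us ev] len Suc.prems
    by auto
  obtain c where c0: "c \<noteq> 0" and unit: "(c \<cdot>\<^sub>v v) \<bullet>c (c \<cdot>\<^sub>v v) = 1"
    using exists_normalizing_scalar[OF v] ev_v v unfolding common_eigenvector_def by auto
  have "(c \<cdot>\<^sub>v v) \<bullet>c u = 0" if "u \<in> set us" for u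
    using that orth v us by (auto simp: subset_iff)
  then have "orthonormal_list (us @ [c \<cdot>\<^sub>v v])"
    using orthonormal_list_snoc[OF on us _ unit] v by simp
  moreover have "common_eigenvector n V (c \<cdot>\<^sub>v v)"
    using common_eigenvector_smult[OF ev_v c0] commuting_familyD(1)[OF fam] v by simp
  ultimately show ?case using len us v ev by (intro exI[of _ "us @ [c \<cdot>\<^sub>v v]"]) auto
qed

section \<open>Families with \<open>\<Sum>\<^sub>\<alpha> V\<^sub>\<alpha>\<^sup>* V\<^sub>\<alpha> = 1\<close>\<close>

lemma foldr_mat_add_carrier:
  assumes "\<forall>a\<in>set xs. F a \<in> carrier_mat d d"
  shows "foldr (\<lambda>a B. F a + B) xs (0\<^sub>m d d) \<in> carrier_mat d d"
  using assms by (induction xs) auto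

lemma cscalar_prod_foldr_mat_add_mult_vec:
  fixes F :: "nat \<Rightarrow> complex mat"
  assumes "\<forall>a\<in>set xs. F a \<in> carrier_mat d d" and x: "x \<in> carrier_vec d" and z: "z \<in> carrier_vec d"
  shows "(foldr (\<lambda>a B. F a + B) xs (0\<^sub>m d d) *\<^sub>v x) \<bullet>c z = (\<Sum>a\<leftarrow>xs. (F a *\<^sub>v x) \<bullet>c z)"
  using assms(1)
proof (induction xs)
  case Nil
  then show ?case using x z by (simp add: scalar_prod_def)
next
  case (Cons a xs)
  let ?B = "foldr (\<lambda>a B. F a + B) xs (0\<^sub>m d d)"
  have Fa: "F a \<in> carrier_mat d d" and B: "?B \<in> carrier_mat d d"
    using Cons.prems foldr_mat_add_carrier by auto
  have "((F a + ?B) *\<^sub>v x) \<bullet>c z = (F a *\<^sub>v x) \<bullet>c z + (?B *\<^sub>v x) \<bullet>c z"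
    using Fa B x z by (simp add: add_mult_distrib_mat_vec add_scalar_prod_distrib[of _ d])
  then show ?case using Cons by simp
qed

definition isometric_family :: "nat \<Rightarrow> nat \<Rightarrow> (nat \<Rightarrow> complex mat) \<Rightarrow> bool" where
  "isometric_family d n V \<longleftrightarrow>
     (\<forall>x\<in>carrier_vec d. \<forall>z\<in>carrier_vec d. (\<Sum>\<beta><n. (V \<beta> *\<^sub>v x) \<bullet>c (V \<beta> *\<^sub>v z)) = x \<bullet>c z)"

lemma isometric_familyD:
  "isometric_family d n V \<Longrightarrow> x \<in> carrier_vec d \<Longrightarrow> z \<in> carrier_vec d \<Longrightarrow>
    (\<Sum>\<beta><n. (V \<beta> *\<^sub>v x) \<bullet>c (V \<beta> *\<^sub>v z)) = x \<bullet>c z"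
  unfolding isometric_family_def by blast

lemma isometric_family_if_mat_sum_adjoint_mult_eq_one:
  fixes V :: "nat \<Rightarrow> complex mat"
  assumes dims: "\<And>\<alpha>. \<alpha> < n \<Longrightarrow> V \<alpha> \<in> carrier_mat d d"
    and sum_id: "mat_sum d (\<lambda>\<alpha>. mat_adjoint (V \<alpha>) * V \<alpha>) n = 1\<^sub>m d"
  shows "isometric_family d n V"
  unfolding isometric_family_def
proof (intro ballI)
  fix x z :: "complex vec" assume x: "x \<in> carrier_vec d" and z: "z \<in> carrier_vec d"
  have summands: "\<forall>a\<in>set [0..<n]. mat_adjoint (V a) * V a \<in> carrier_mat d d"
    using dims by (auto intro!: mult_carrier_mat[of _ d d] mat_adjoint_carrier)
  have "x \<bullet>c z = (mat_sum d (\<lambda>\<alpha>. mat_adjoint (V \<alpha>) * V \<alpha>) n *\<^sub>v x) \<bullet>c z"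
    unfolding sum_id using x by simp
  also have "\<dots> = (\<Sum>a<n. ((mat_adjoint (V a) * V a) *\<^sub>v x) \<bullet>c z)"
    unfolding mat_sum_def cscalar_prod_foldr_mat_add_mult_vec[OF summands x z]
    by (simp add: interv_sum_list_conv_sum_set_nat atLeast0LessThan)
  also have "\<dots> = (\<Sum>\<beta><n. (V \<beta> *\<^sub>v x) \<bullet>c (V \<beta> *\<^sub>v z))"
  proof (rule sum.cong)
    fix b assume "b \<in> {..<n}"
    then have Vb: "V b \<in> carrier_mat d d" using dims by auto
    then show "((mat_adjoint (V b) * V b) *\<^sub>v x) \<bullet>c z = (V b *\<^sub>v x) \<bullet>c (V b *\<^sub>v z)"
      using x z mat_adjoint_carrier[OF Vb]
      by (simp add: assoc_mult_mat_vec[of _ d d _ d] cscalar_prod_mult_mat_vec_left[of _ d]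
          mat_adjoint_adjoint)
  qed simp
  finally show "(\<Sum>\<beta><n. (V \<beta> *\<^sub>v x) \<bullet>c (V \<beta> *\<^sub>v z)) = x \<bullet>c z" by simp
qed

lemma sum_sq_joint_eigenvalues_eq_one:
  fixes V :: "nat \<Rightarrow> complex mat" and lam :: "nat \<Rightarrow> complex"
  assumes iso: "isometric_family d n V"
    and e: "e \<in> carrier_vec d" and e0: "e \<noteq> 0\<^sub>v d"
    and ev: "\<And>\<beta>. \<beta> < n \<Longrightarrow> V \<beta> *\<^sub>v e = lam \<beta> \<cdot>\<^sub>v e"
  shows "(\<Sum>\<beta><n. lam \<beta> * cnj (lam \<beta>)) = 1"
proof -
  have "e \<bullet>c e = (\<Sum>\<beta><n. (V \<beta> *\<^sub>v e) \<bullet>c (V \<beta> *\<^sub>v e))"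
    using isometric_familyD[OF iso e e] by simp
  also have "\<dots> = (\<Sum>\<beta><n. lam \<beta> * cnj (lam \<beta>) * (e \<bullet>c e))"
    using e by (intro sum.cong) (simp_all add: ev conjugate_smult_vec)
  also have "\<dots> = (\<Sum>\<beta><n. lam \<beta> * cnj (lam \<beta>)) * (e \<bullet>c e)"
    by (simp add: sum_distrib_right)
  finally show ?thesis using e e0 by simp
qed

lemma sum_cross_term_adjoint_image:
  fixes V :: "nat \<Rightarrow> complex mat" and lam :: "nat \<Rightarrow> complex"
  assumes fam: "commuting_family d n V" and iso: "isometric_family d n V"
    and e: "e \<in> carrier_vec d" and ev: "\<And>\<beta>. \<beta> < n \<Longrightarrow> V \<beta> *\<^sub>v e = lam \<beta> \<cdot>\<^sub>v e"
    and \<alpha>: "\<alpha> < n"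
  defines "y \<equiv> mat_adjoint (V \<alpha>) *\<^sub>v e"
  shows "(\<Sum>\<beta><n. (V \<beta> *\<^sub>v y) \<bullet>c (lam \<beta> \<cdot>\<^sub>v y)) = y \<bullet>c y"
proof -
  have A: "V \<alpha> \<in> carrier_mat d d" using commuting_familyD(1)[OF fam \<alpha>] .
  have y: "y \<in> carrier_vec d" using A e mat_adjoint_carrier[OF A] by (simp add: y_def)
  have adj: "w \<bullet>c y = (V \<alpha> *\<^sub>v w) \<bullet>c e" if "w \<in> carrier_vec d" for w
    using cscalar_prod_mult_mat_vec_left[OF A that e] by (simp add: y_def)
  have "(V b *\<^sub>v y) \<bullet>c (lam b \<cdot>\<^sub>v y) = (V b *\<^sub>v (V \<alpha> *\<^sub>v y)) \<bullet>c (V b *\<^sub>v e)"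
    if b: "b < n" for b
  proof -
    have Vb: "V b \<in> carrier_mat d d" using commuting_familyD(1)[OF fam b] .
    have "(V b *\<^sub>v y) \<bullet>c y = (V \<alpha> *\<^sub>v (V b *\<^sub>v y)) \<bullet>c e" using adj Vb y by simp
    also have "\<dots> = (V b *\<^sub>v (V \<alpha> *\<^sub>v y)) \<bullet>c e"
      using commuting_family_mult_vec_commute[OF fam \<alpha> b y] by simp
    finally show ?thesis using Vb A y e by (simp add: ev[OF b] conjugate_smult_vec)
  qed
  then have "(\<Sum>\<beta><n. (V \<beta> *\<^sub>v y) \<bullet>c (lam \<beta> \<cdot>\<^sub>v y))
      = (\<Sum>\<beta><n. (V \<beta> *\<^sub>v (V \<alpha> *\<^sub>v y)) \<bullet>c (V \<beta> *\<^sub>v e))"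
    by (intro sum.cong) simp_all
  also have "\<dots> = (V \<alpha> *\<^sub>v y) \<bullet>c e" using isometric_familyD[OF iso] A y e by simp
  also have "\<dots> = y \<bullet>c y" using adj[OF y] by simp
  finally show ?thesis .
qed

lemma adjoint_preserves_joint_eigenspace:
  fixes V :: "nat \<Rightarrow> complex mat" and lam :: "nat \<Rightarrow> complex"
  assumes fam: "commuting_family d n V" and iso: "isometric_family d n V"
    and e: "e \<in> carrier_vec d" and e0: "e \<noteq> 0\<^sub>v d"
    and ev: "\<And>\<beta>. \<beta> < n \<Longrightarrow> V \<beta> *\<^sub>v e = lam \<beta> \<cdot>\<^sub>v e"
    and \<alpha>: "\<alpha> < n" and \<beta>: "\<beta> < n"
  shows "V \<beta> *\<^sub>v (mat_adjoint (V \<alpha>) *\<^sub>v e) = lam \<beta> \<cdot>\<^sub>v (mat_adjoint (V \<alpha>) *\<^sub>v e)"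
proof -
  define y where "y = mat_adjoint (V \<alpha>) *\<^sub>v e"
  have y: "y \<in> carrier_vec d"
    using e mat_adjoint_carrier[OF commuting_familyD(1)[OF fam \<alpha>]] by (simp add: y_def)
  have Vy: "V b *\<^sub>v y \<in> carrier_vec d" if "b < n" for b
    using mult_mat_vec_carrier[OF commuting_familyD(1)[OF fam that] y] .
  \<comment> \<open>With \<open>r \<beta> = V \<beta> y - \<lambda>\<^sub>\<beta> y\<close>, each of the four sums in the expansion of
    \<open>\<Sum>\<beta>. \<parallel>r \<beta>\<parallel>\<^sup>2\<close> equals \<open>\<parallel>y\<parallel>\<^sup>2\<close>.\<close>
  have cross: "(\<Sum>\<beta><n. (V \<beta> *\<^sub>v y) \<bullet>c (lam \<beta> \<cdot>\<^sub>v y)) = y \<bullet>c y"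
    unfolding y_def by (rule sum_cross_term_adjoint_image[OF fam iso e ev \<alpha>])
  have "(\<Sum>\<beta><n. (lam \<beta> \<cdot>\<^sub>v y) \<bullet>c (V \<beta> *\<^sub>v y)) = cnj (\<Sum>\<beta><n. (V \<beta> *\<^sub>v y) \<bullet>c (lam \<beta> \<cdot>\<^sub>v y))"
    unfolding cnj_sum using Vy y by (intro sum.cong refl) (simp add: cnj_cscalar_prod[of _ d])
  then have cross': "(\<Sum>\<beta><n. (lam \<beta> \<cdot>\<^sub>v y) \<bullet>c (V \<beta> *\<^sub>v y)) = y \<bullet>c y"
    unfolding cross using cnj_cscalar_prod[OF y y] by simp
  have "(\<Sum>\<beta><n. (lam \<beta> \<cdot>\<^sub>v y) \<bullet>c (lam \<beta> \<cdot>\<^sub>v y)) = (\<Sum>\<beta><n. lam \<beta> * cnj (lam \<beta>)) * (y \<bullet>c y)"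
    unfolding sum_distrib_right using y by (intro sum.cong) (simp_all add: conjugate_smult_vec)
  then have scalar: "(\<Sum>\<beta><n. (lam \<beta> \<cdot>\<^sub>v y) \<bullet>c (lam \<beta> \<cdot>\<^sub>v y)) = y \<bullet>c y"
    using sum_sq_joint_eigenvalues_eq_one[OF iso e e0 ev] by simp
  define r where "r b = V b *\<^sub>v y - lam b \<cdot>\<^sub>v y" for b
  have "(\<Sum>b<n. r b \<bullet>c r b)
      = (\<Sum>b<n. (V b *\<^sub>v y) \<bullet>c (V b *\<^sub>v y) - (V b *\<^sub>v y) \<bullet>c (lam b \<cdot>\<^sub>v y)
           - (lam b \<cdot>\<^sub>v y) \<bullet>c (V b *\<^sub>v y) + (lam b \<cdot>\<^sub>v y) \<bullet>c (lam b \<cdot>\<^sub>v y))"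
    unfolding r_def using Vy y by (intro sum.cong refl cscalar_prod_diff_diff) auto
  also have "\<dots> = 0"
    unfolding sum.distrib sum_subtractf isometric_familyD[OF iso y y] cross cross' scalar by simp
  finally have "r \<beta> \<bullet>c r \<beta> = 0"
    using \<beta> sum_nonneg_eq_0_iff[of "{..<n}" "\<lambda>b. r b \<bullet>c r b"] by auto
  then have "V \<beta> *\<^sub>v y = lam \<beta> \<cdot>\<^sub>v y"
    unfolding r_def using Vy[OF \<beta>] y by (intro eq_of_cscalar_prod_diff_eq_0) auto
  then show ?thesis by (simp add: y_def)
qed

lemma adjoint_mult_joint_eigenvector:
  fixes V :: "nat \<Rightarrow> complex mat" and lam :: "nat \<Rightarrow> complex"
  assumes fam: "commuting_family d n V" and iso: "isometric_family d n V"
    and e: "e \<in> carrier_vec d" and e0: "e \<noteq> 0\<^sub>v d"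
    and ev: "\<And>\<beta>. \<beta> < n \<Longrightarrow> V \<beta> *\<^sub>v e = lam \<beta> \<cdot>\<^sub>v e"
    and \<alpha>: "\<alpha> < n"
  shows "mat_adjoint (V \<alpha>) *\<^sub>v e = cnj (lam \<alpha>) \<cdot>\<^sub>v e"
proof -
  define A where "A = V \<alpha>"
  define y where "y = mat_adjoint A *\<^sub>v e"
  have A: "A \<in> carrier_mat d d" using commuting_familyD(1)[OF fam \<alpha>] by (simp add: A_def)
  have y: "y \<in> carrier_vec d" using A e mat_adjoint_carrier[OF A] by (simp add: y_def)
  have Ay: "A *\<^sub>v y = lam \<alpha> \<cdot>\<^sub>v y"
    using adjoint_preserves_joint_eigenspace[OF fam iso e e0 ev \<alpha> \<alpha>] by (simp add: A_def y_def)
  have adj: "w \<bullet>c y = (A *\<^sub>v w) \<bullet>c e" if "w \<in> carrier_vec d" for w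
    using cscalar_prod_mult_mat_vec_left[OF A that e] by (simp add: y_def)
  have ey: "e \<bullet>c y = lam \<alpha> * (e \<bullet>c e)"
    using adj[OF e] ev[OF \<alpha>] e by (simp add: A_def)
  have ye: "y \<bullet>c e = cnj (lam \<alpha>) * (e \<bullet>c e)"
    using cnj_cscalar_prod[OF e y] cnj_cscalar_prod[OF e e] ey by (metis complex_cnj_mult)
  have yy: "y \<bullet>c y = lam \<alpha> * (y \<bullet>c e)"
    using adj[OF y] Ay y e by simp
  have "(y - cnj (lam \<alpha>) \<cdot>\<^sub>v e) \<bullet>c (y - cnj (lam \<alpha>) \<cdot>\<^sub>v e) = 0"
    using y e by (simp add: cscalar_prod_diff_diff[of _ d] conjugate_smult_vec yy ye ey algebra_simps)
  then have "y = cnj (lam \<alpha>) \<cdot>\<^sub>v e"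
    using y e by (intro eq_of_cscalar_prod_diff_eq_0) auto
  then show ?thesis by (simp add: y_def A_def)
qed

lemma adjoint_mult_common_eigenvector:
  fixes V :: "nat \<Rightarrow> complex mat"
  assumes fam: "commuting_family d n V" and iso: "isometric_family d n V"
    and u: "u \<in> carrier_vec d" and ev: "common_eigenvector n V u" and \<alpha>: "\<alpha> < n"
  shows "\<exists>c. mat_adjoint (V \<alpha>) *\<^sub>v u = c \<cdot>\<^sub>v u"
proof -
  obtain lam where lam: "\<And>\<beta>. \<beta> < n \<Longrightarrow> V \<beta> *\<^sub>v u = lam \<beta> \<cdot>\<^sub>v u"
    using ev unfolding common_eigenvector_def by metis
  have "u \<noteq> 0\<^sub>v d" using ev u unfolding common_eigenvector_def by auto
  from adjoint_mult_joint_eigenvector[OF fam iso u this lam \<alpha>] show ?thesis by blast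
qed

theorem theorem1:
  fixes d n :: nat and V :: "nat \<Rightarrow> complex mat"
  assumes dims: "\<And>\<alpha>. \<alpha> < n \<Longrightarrow> V \<alpha> \<in> carrier_mat d d"
    and comm: "\<And>\<alpha> \<beta>. \<alpha> < n \<Longrightarrow> \<beta> < n \<Longrightarrow> V \<alpha> * V \<beta> = V \<beta> * V \<alpha>"
    and sum_id: "mat_sum d (\<lambda>\<alpha>. mat_adjoint (V \<alpha>) * V \<alpha>) n = 1\<^sub>m d"
  shows "(\<forall>\<alpha><n. V \<alpha> * mat_adjoint (V \<alpha>) = mat_adjoint (V \<alpha>) * V \<alpha>)
    \<and> (\<exists>us. orthonormal_basis d us \<and> (\<forall>u\<in>set us. \<forall>\<alpha><n. is_eigenvector (V \<alpha>) u))"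
proof -
  have fam: "commuting_family d n V" using dims comm unfolding commuting_family_def by blast
  have iso: "isometric_family d n V"
    by (rule isometric_family_if_mat_sum_adjoint_mult_eq_one[OF dims sum_id])
  note adj = adjoint_mult_common_eigenvector[OF fam iso]
  obtain us where len: "length us = d" and us: "set us \<subseteq> carrier_vec d"
    and on: "orthonormal_list us" and ev: "\<forall>u\<in>set us. common_eigenvector n V u"
    using orthonormal_list_of_common_eigenvectors[OF fam adj, of d] by auto
  have basis: "orthonormal_basis d us" using orthonormal_basisI[OF len us on] .
  have "V \<alpha> * mat_adjoint (V \<alpha>) = mat_adjoint (V \<alpha>) * V \<alpha>" if \<alpha>: "\<alpha> < n" for \<alpha>
  proof (rule normal_if_orthonormal_basis_of_eigenvectors_of_adjoint[OF dims[OF \<alpha>] basis])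
    fix u assume "u \<in> set us"
    then have uc: "u \<in> carrier_vec d" and ev_u: "common_eigenvector n V u" using us ev by auto
    show "\<exists>a. V \<alpha> *\<^sub>v u = a \<cdot>\<^sub>v u" using ev_u \<alpha> unfolding common_eigenvector_def by blast
    show "\<exists>b. mat_adjoint (V \<alpha>) *\<^sub>v u = b \<cdot>\<^sub>v u" by (rule adj[OF uc ev_u \<alpha>])
  qed
  moreover have "is_eigenvector (V \<alpha>) u" if "u \<in> set us" "\<alpha> < n" for u \<alpha>
    using ev that unfolding common_eigenvector_def is_eigenvector_def by blast
  ultimately show ?thesis using basis by blast
qed

end
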